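(* Let $U_n\in U(n)$ be a unitary matrix whose eigenvalues are pairwise distinct and different from $1$, let $Z_n(X)=\det(X-U_n)$, $\xi_n(z)=Z_n(e^{2i\pi z/n})/Z_n(1)$, and let $y_k^{(n)}$, $k\in\mathbb{Z}$, be its renormalized eigenangles as in the context. Then for all $z\in\mathbb{C}$, $$\xi_n(z) = e^{i\pi z}\lim_{A\to\infty}\prod_{k=-A}^{A}\left(1-\frac{z}{y_k^{(n)}}\right),$$ the limit being taken over integers $A\to\infty$.
   Context: $(\theta_k^{(n)})_{k\in\mathbb{Z}}$ is the increasing enumeration of all real $\theta$ with $e^{i\theta}$ an eigenvalue of $U_n$, indexed so that $\dots<\theta_0^{(n)}<0<\theta_1^{(n)}<\dots$ (so $\theta_{k+n}^{(n)}=\theta_k^{(n)}+2\pi$), and $y_k^{(n)}=\frac{n}{2\pi}\theta_k^{(n)}$. *)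

theory Defs
  imports "HOL-Analysis.Analysis"
begin

definition adjoint_mat :: "complex^'n^'n \<Rightarrow> complex^'n^'n" where
  "adjoint_mat U = (\<chi> i j. cnj (U $ j $ i))"

definition unitary_mat :: "complex^'n::finite^'n \<Rightarrow> bool" where
  "unitary_mat U \<longleftrightarrow> adjoint_mat U ** U = mat 1 \<and> U ** adjoint_mat U = mat 1"

definition is_eigenvalue :: "complex^'n::finite^'n \<Rightarrow> complex \<Rightarrow> bool" where
  "is_eigenvalue U c \<longleftrightarrow> (\<exists>v. v \<noteq> 0 \<and> U *v v = c *s v)"

definition Zpoly :: "complex^'n::finite^'n \<Rightarrow> complex \<Rightarrow> complex" where
  "Zpoly U X = det (mat X - U)"

definition xi :: "complex^'n::finite^'n \<Rightarrow> complex \<Rightarrow> complex" where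
  "xi U z = Zpoly U (exp (2 * \<i> * of_real pi * z / of_nat CARD('n))) / Zpoly U 1"

end

theory Submission
  imports Defs "HOL-Computational_Algebra.Polynomial" "HOL-Real_Asymp.Real_Asymp"
begin

text \<open>Since the eigenvalues are simple and lie on the unit circle, the enumeration \<open>\<theta>\<close> of the
  eigenangles satisfies \<open>\<theta>(k + n) = \<theta>(k) + 2\<pi>\<close>, and \<open>Z\<^sub>n(X)\<close> is the product of \<open>X - exp(i\<theta>\<^sub>j)\<close>
  over \<open>1 \<le> j \<le> n\<close>, where \<open>0 < \<theta>\<^sub>j < 2\<pi>\<close>. With \<open>w = 2\<pi>z/n\<close>, the \<open>j\<close>-th factor of \<open>\<xi>\<^sub>n(z)\<close> is
  \<open>exp(iw/2) sin((\<theta>\<^sub>j - w)/2) / sin(\<theta>\<^sub>j/2)\<close>, and the Euler product of the sine writes this ratio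
  as the limit of the products of \<open>1 - w/(\<theta>\<^sub>j + 2\<pi>m)\<close> over \<open>|m| \<le> M\<close>. By periodicity these are the
  products of \<open>1 - w/\<theta>\<^sub>k\<close> over the blocks \<open>1 - nM \<le> k \<le> n + nM\<close>. The symmetric products over
  \<open>|k| \<le> nM + r\<close> differ from them by boundedly many factors tending to 1, so they converge along
  every residue class of \<open>A\<close> modulo \<open>n\<close>, hence along all \<open>A\<close>.\<close>

definition charpoly :: "complex^'n::finite^'n \<Rightarrow> complex poly" where
  "charpoly U = (\<Sum>p\<in>{p. p permutes (UNIV::'n set)}. of_int (sign p) *
       (\<Prod>i\<in>UNIV. [: - U$i$p i, if i = p i then 1 else 0 :]))"

lemma poly_charpoly: "poly (charpoly U) X = Zpoly U X"
  unfolding charpoly_def Zpoly_def det_def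
  by (auto simp: poly_sum poly_prod mat_def intro!: sum.cong prod.cong)

lemma degree_charpoly_summand_le:
  fixes U :: "complex^'n::finite^'n"
  shows "degree (\<Prod>i\<in>UNIV. [: - U$i$p i, if i = p i then 1 else 0 :]) \<le> card {i. p i = i}"
proof -
  have "degree (\<Prod>i\<in>UNIV. [: - U$i$p i, if i = p i then 1 else 0 :])
     \<le> (\<Sum>i\<in>UNIV. degree [: - U$i$p i, if i = p i then (1::complex) else 0 :])"
    by (rule degree_prod_sum_le[simplified comp_def]) simp
  also have "\<dots> = (\<Sum>i\<in>UNIV. if p i = i then 1 else 0)"
    by (intro sum.cong) auto
  also have "\<dots> = card {i. p i = i}" by (simp add: sum.If_cases)
  finally show ?thesis .
qed

lemma coeff_charpoly_summand:
  fixes U :: "complex^'n::finite^'n"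
  shows "coeff (\<Prod>i\<in>UNIV. [: - U$i$p i, if i = p i then 1 else 0 :]) CARD('n) = (if p = id then 1 else 0)"
proof (cases "p = id")
  case True
  have "lead_coeff (\<Prod>i\<in>UNIV. [: - U$i$i, 1 :]) = 1"
    by (simp add: lead_coeff_prod)
  moreover have "degree (\<Prod>i\<in>(UNIV::'n set). [: - U$i$i, 1 :]) = CARD('n)"
    by (subst degree_prod_eq_sum_degree) auto
  ultimately show ?thesis using True by simp
next
  case False
  then obtain j where "p j \<noteq> j" by (metis eq_id_iff)
  then have "card {i. p i = i} < CARD('n)" by (intro psubset_card_mono) auto
  then show ?thesis
    using False degree_charpoly_summand_le[of U p] by (simp add: coeff_eq_0)
qed

lemma degree_charpoly_le: "degree (charpoly (U::complex^'n::finite^'n)) \<le> CARD('n)"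
  unfolding charpoly_def
proof (intro degree_sum_le)
  fix p :: "'n \<Rightarrow> 'n"
  have "degree (of_int (sign p) * (\<Prod>i\<in>UNIV. [: - U$i$p i, if i = p i then 1 else 0 :]))
     \<le> degree (\<Prod>i\<in>UNIV. [: - U$i$p i, if i = p i then 1 else 0 :])"
    by (simp add: of_int_poly degree_mult_le)
  also have "\<dots> \<le> CARD('n)"
    using degree_charpoly_summand_le[of U p] card_mono[of UNIV "{i. p i = i}"] by simp
  finally show "degree (of_int (sign p) * (\<Prod>i\<in>UNIV. [: - U$i$p i, if i = p i then 1 else 0 :])) \<le> CARD('n)" .
qed simp

lemma coeff_charpoly_card: "coeff (charpoly (U::complex^'n::finite^'n)) CARD('n) = 1"
proof -
  have "coeff (charpoly U) CARD('n) = (\<Sum>p\<in>{p. p permutes (UNIV::'n set)}. of_int (sign p) *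
       (if p = id then 1 else 0))"
    unfolding charpoly_def coeff_sum by (simp add: of_int_poly coeff_charpoly_summand)
  also have "\<dots> = 1" by (simp add: if_distrib sign_id sum.delta' permutes_id cong: if_cong)
  finally show ?thesis .
qed

lemma monic_poly_eq_prod_roots:
  fixes p :: "'a::idom poly"
  assumes "finite E" "degree p \<le> card E" "coeff p (card E) = 1"
    and roots: "\<And>e. e \<in> E \<Longrightarrow> poly p e = 0"
  shows "p = (\<Prod>e\<in>E. [:-e, 1:])"
proof -
  define q where "q = (\<Prod>e\<in>E. [:-e, 1:])"
  have lead_q: "lead_coeff q = 1"
    unfolding q_def by (simp add: lead_coeff_prod)
  have deg_q: "degree q = card E"
    unfolding q_def using \<open>finite E\<close> by (simp add: degree_prod_eq_sum_degree)
  have "p - q = 0"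
  proof (rule ccontr)
    assume nz: "p - q \<noteq> 0"
    have "degree (p - q) \<le> card E"
      using degree_diff_le[OF assms(2)] deg_q by simp
    moreover have "coeff (p - q) (card E) = 0"
      using assms(3) lead_q deg_q by simp
    ultimately have "degree (p - q) < card E"
      using nz by (metis le_neq_implies_less leading_coeff_0_iff)
    moreover have "E \<subseteq> {x. poly (p - q) x = 0}"
      using roots \<open>finite E\<close> by (auto simp: q_def poly_prod prod_zero_iff)
    then have "card E \<le> degree (p - q)"
      using card_mono[OF poly_roots_finite[OF nz]] card_poly_roots_bound[OF nz] by (meson le_trans)
    ultimately show False by simp
  qed
  then show ?thesis by (simp add: q_def)
qed

lemma matrix_vector_mult_mat: "mat c *v v = c *s (v :: 'a::semiring_1^'n)"
proof -
  have "(\<Sum>j\<in>UNIV. (if i = j then c else 0) * v$j) = (\<Sum>j\<in>UNIV. if i = j then c * v$j else 0)" for i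
    by (intro sum.cong) auto
  then show ?thesis by (simp add: vec_eq_iff matrix_vector_mult_def mat_def)
qed

lemma Zpoly_eigenvalue:
  fixes U :: "complex^'n::finite^'n"
  assumes "is_eigenvalue U c"
  shows "Zpoly U c = 0"
proof (rule ccontr)
  obtain v where v: "v \<noteq> 0" "U *v v = c *s v"
    using assms unfolding is_eigenvalue_def by blast
  assume "Zpoly U c \<noteq> 0"
  then obtain B where B: "B ** (mat c - U) = mat 1"
    unfolding Zpoly_def by (metis invertible_det_nz invertible_def)
  have "(mat c - U) *v v = 0"
    using v by (simp add: matrix_vector_mult_diff_rdistrib matrix_vector_mult_mat)
  then have "v = 0"
    by (metis B matrix_vector_mul_assoc matrix_vector_mul_lid matrix_vector_mult_0_right)
  with v show False by simp
qed

lemma Zpoly_eq_prod_eigenvalues: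
  fixes U :: "complex^'n::finite^'n"
  assumes "card {c. is_eigenvalue U c} = CARD('n)"
  shows "Zpoly U X = (\<Prod>e\<in>{c. is_eigenvalue U c}. X - e)"
proof -
  have "finite {c. is_eigenvalue U c}"
    using assms by (metis card_ge_0_finite zero_less_card_finite)
  then have "charpoly U = (\<Prod>e\<in>{c. is_eigenvalue U c}. [:-e, 1:])"
    using assms degree_charpoly_le coeff_charpoly_card
    by (intro monic_poly_eq_prod_roots) (simp_all add: poly_charpoly Zpoly_eigenvalue)
  then show ?thesis by (simp flip: poly_charpoly add: poly_prod)
qed

definition herm_inner :: "complex^'n::finite \<Rightarrow> complex^'n \<Rightarrow> complex" where
  "herm_inner a b = (\<Sum>i\<in>UNIV. cnj (a$i) * b$i)"

lemma herm_inner_mult_left: "herm_inner (A *v a) b = herm_inner a (adjoint_mat A *v b)"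
proof -
  have "herm_inner (A *v a) b = (\<Sum>i\<in>UNIV. \<Sum>j\<in>UNIV. cnj (A$i$j) * cnj (a$j) * b$i)"
    unfolding herm_inner_def matrix_vector_mult_def
    by (simp add: sum_distrib_right sum_distrib_left mult_ac)
  also have "\<dots> = (\<Sum>j\<in>UNIV. \<Sum>i\<in>UNIV. cnj (A$i$j) * cnj (a$j) * b$i)"
    by (rule sum.swap)
  also have "\<dots> = herm_inner a (adjoint_mat A *v b)"
    unfolding herm_inner_def matrix_vector_mult_def adjoint_mat_def
    by (simp add: sum_distrib_left mult_ac)
  finally show ?thesis .
qed

lemma herm_inner_self: "herm_inner v v = of_real ((norm v)\<^sup>2)"
proof -
  have "herm_inner v v = (\<Sum>i\<in>UNIV. of_real ((norm (v$i))\<^sup>2))"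
    unfolding herm_inner_def by (simp only: complex_norm_square mult.commute)
  then show ?thesis
    by (simp add: norm_vec_def L2_set_def sum_nonneg del: of_real_power flip: of_real_sum)
qed

lemma unitary_eigenvalue_norm:
  fixes U :: "complex^'n::finite^'n"
  assumes "unitary_mat U" "is_eigenvalue U c"
  shows "norm c = 1"
proof -
  obtain v where v: "v \<noteq> 0" "U *v v = c *s v"
    using assms(2) unfolding is_eigenvalue_def by blast
  have "cnj c * c * herm_inner v v = herm_inner (U *v v) (U *v v)"
    using v(2) unfolding herm_inner_def by (simp add: sum_distrib_left mult_ac)
  also have "\<dots> = herm_inner v v"
    using assms(1) by (simp add: herm_inner_mult_left matrix_vector_mul_assoc unitary_mat_def)
  finally have "of_real ((norm c)\<^sup>2) * herm_inner v v = herm_inner v v"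
    by (simp only: complex_norm_square mult.commute)
  moreover have "herm_inner v v \<noteq> 0"
    using v(1) by (simp add: herm_inner_self)
  ultimately have "(norm c)\<^sup>2 = 1"
    by (metis mult_cancel_right2 of_real_eq_1_iff)
  then show ?thesis
    using norm_ge_zero[of c] by (auto simp: power2_eq_1_iff)
qed

lemma exp_i_add_2pi_mult: "exp (\<i> * of_real (t + 2 * pi * of_int m)) = exp (\<i> * of_real t)"
proof -
  have "\<i> * of_real (t + 2 * pi * of_int m) = \<i> * of_real t + \<i> * (of_int m * (of_real pi * 2))"
    by (simp add: algebra_simps)
  then show ?thesis by simp
qed

lemma inj_on_exp_i_period: "inj_on (\<lambda>t::real. exp (\<i> * of_real t)) {0..<2*pi}"
proof (rule inj_onI)
  fix s t :: real
  assume s: "s \<in> {0..<2*pi}" and t: "t \<in> {0..<2*pi}" and "exp (\<i> * of_real s) = exp (\<i> * of_real t)"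
  then obtain m :: int where "\<i> * of_real s = \<i> * of_real t + (of_int (2 * m) * pi) * \<i>"
    unfolding exp_eq by blast
  then have "Im (\<i> * of_real s) = Im (\<i> * of_real t + (of_int (2 * m) * pi) * \<i>)"
    by simp
  then have st: "s = t + 2 * pi * m"
    by simp
  have upper: "2 * pi * m < 2 * pi * 1" and lower: "2 * pi * (-1) < 2 * pi * m"
    using s t unfolding st atLeastLessThan_iff by linarith+
  have "real_of_int m < 1" using mult_left_less_imp_less[OF upper] by simp
  moreover have "-1 < real_of_int m" using mult_left_less_imp_less[OF lower] by simp
  ultimately have "m = 0" by simp
  with st show "s = t" by simp
qed

lemma int_decomp_first_period:
  fixes k p :: int
  assumes "p > 0"
  obtains j m where "k = j + p * m" "1 \<le> j" "j \<le> p"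
proof
  show "k = ((k - 1) mod p + 1) + p * ((k - 1) div p)"
    by (simp add: algebra_simps)
  show "1 \<le> (k - 1) mod p + 1" "(k - 1) mod p + 1 \<le> p"
    using pos_mod_sign[OF assms, of "k - 1"] pos_mod_bound[OF assms, of "k - 1"] by linarith+
qed

lemma strict_mono_shift_of_periodic_range:
  fixes \<theta> :: "int \<Rightarrow> real"
  assumes sm: "strict_mono \<theta>" and "T > 0"
    and per: "\<And>t. t \<in> range \<theta> \<longleftrightarrow> t + T \<in> range \<theta>"
  shows "\<exists>p>0. \<forall>k. \<theta> (k + p) = \<theta> k + T"
proof -
  have lt: "\<theta> a < \<theta> b \<longleftrightarrow> a < b" for a b
    using strict_mono_less[OF sm] .
  have "\<forall>k. \<exists>s. \<theta> s = \<theta> k + T"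
    using per by (metis rangeE rangeI)
  then obtain \<sigma> where \<sigma>: "\<And>k. \<theta> (\<sigma> k) = \<theta> k + T"
    by metis
  have step: "\<sigma> (k + 1) = \<sigma> k + 1" for k
  proof (rule ccontr)
    assume ne: "\<sigma> (k + 1) \<noteq> \<sigma> k + 1"
    have "\<sigma> k < \<sigma> (k + 1)"
      using \<sigma>[of k] \<sigma>[of "k + 1"] lt[of k "k + 1"] lt[of "\<sigma> k" "\<sigma> (k + 1)"] by simp
    with ne have gap: "\<sigma> k + 1 < \<sigma> (k + 1)" by simp
    obtain l where l: "\<theta> l = \<theta> (\<sigma> k + 1) - T"
      using per[of "\<theta> (\<sigma> k + 1) - T"] by auto
    have "\<theta> k < \<theta> l" "\<theta> l < \<theta> (k + 1)"
      using l \<sigma>[of k] \<sigma>[of "k + 1"] lt[of "\<sigma> k" "\<sigma> k + 1"] lt[of "\<sigma> k + 1" "\<sigma> (k + 1)"] gap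
      by auto
    then have "k < l" "l < k + 1" using lt by blast+
    then show False by simp
  qed
  have \<sigma>_eq: "\<sigma> k = k + \<sigma> 0" for k
  proof (induct k rule: int_induct[where k = 0])
    case (step2 i)
    then show ?case using step[of "i - 1"] by simp
  qed (use step in simp_all)
  have "\<theta> 0 < \<theta> (\<sigma> 0)" using \<sigma>[of 0] \<open>T > 0\<close> by simp
  then have "0 < \<sigma> 0" using lt by blast
  moreover have "\<forall>k. \<theta> (k + \<sigma> 0) = \<theta> k + T" using \<sigma> \<sigma>_eq by metis
  ultimately show ?thesis by blast
qed

lemma shift_iterate:
  fixes \<theta> :: "int \<Rightarrow> real"
  assumes "\<And>k. \<theta> (k + p) = \<theta> k + T"
  shows "\<theta> (k + p * m) = \<theta> k + T * m"
proof (induct m rule: int_induct[where k = 0])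
  case (step1 i)
  have "\<theta> (k + p * (i + 1)) = \<theta> (k + p * i) + T"
    using assms[of "k + p * i"] by (simp add: algebra_simps)
  with step1 show ?case by (simp add: algebra_simps)
next
  case (step2 i)
  have "\<theta> (k + p * i) = \<theta> (k + p * (i - 1)) + T"
    using assms[of "k + p * (i - 1)"] by (simp add: algebra_simps)
  with step2 show ?case by (simp add: algebra_simps)
qed simp

locale unitary_eigenangles =
  fixes U :: "complex^'n::finite^'n" and \<theta> :: "int \<Rightarrow> real"
  assumes unitary: "unitary_mat U"
    and mono: "strict_mono \<theta>"
    and range_eq: "range \<theta> = {t. is_eigenvalue U (exp (\<i> * of_real t))}"
    and neg_0: "\<theta> 0 < 0" and pos_1: "0 < \<theta> 1"
begin

lemma angle_in_first_period:
  assumes shift: "\<And>k. \<theta> (k + p) = \<theta> k + 2 * pi" and "1 \<le> j" "j \<le> p"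
  shows "0 < \<theta> j \<and> \<theta> j < 2 * pi"
  using strict_mono_less_eq[OF mono, of 1 j] strict_mono_less_eq[OF mono, of j p]
    shift[of 0] neg_0 pos_1 assms(2,3) by auto

lemma inj_on_exp_angles:
  assumes shift: "\<And>k. \<theta> (k + p) = \<theta> k + 2 * pi"
  shows "inj_on (\<lambda>j. exp (\<i> * of_real (\<theta> j))) {1..p}"
proof -
  have "inj_on (\<lambda>t::real. exp (\<i> * of_real t)) (\<theta> ` {1..p})"
    by (rule inj_on_subset[OF inj_on_exp_i_period])
      (use angle_in_first_period[OF shift] in \<open>force\<close>)
  then show ?thesis
    using strict_mono_imp_inj_on[OF mono] comp_inj_on[of \<theta> "{1..p}"] by (simp add: comp_def inj_on_subset)
qed

lemma eigenvalues_eq_exp_angles: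
  assumes "p > 0" and shift: "\<And>k. \<theta> (k + p) = \<theta> k + 2 * pi"
  shows "{c. is_eigenvalue U c} = (\<lambda>j. exp (\<i> * of_real (\<theta> j))) ` {1..p}"
proof (intro equalityI subsetI)
  fix e assume "e \<in> {c. is_eigenvalue U c}"
  then have eig: "is_eigenvalue U e" by simp
  then have "norm e = 1" using unitary_eigenvalue_norm[OF unitary] by blast
  then have "e \<noteq> 0" by auto
  then have "exp (\<i> * of_real (Arg e)) = e"
    using cis_Arg[of e] \<open>norm e = 1\<close> by (simp add: cis_conv_exp sgn_div_norm)
  then obtain k where k: "e = exp (\<i> * of_real (\<theta> k))"
    using range_eq eig by (metis (mono_tags, lifting) mem_Collect_eq rangeE)
  obtain j m where "k = j + p * m" "1 \<le> j" "j \<le> p"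
    using int_decomp_first_period[OF \<open>p > 0\<close>] .
  then have "e = exp (\<i> * of_real (\<theta> j))"
    using k shift_iterate[where \<theta> = \<theta>, OF shift, of j m] exp_i_add_2pi_mult[of "\<theta> j" m] by (simp add: mult.commute)
  with \<open>1 \<le> j\<close> \<open>j \<le> p\<close> show "e \<in> (\<lambda>j. exp (\<i> * of_real (\<theta> j))) ` {1..p}" by auto
next
  fix e assume "e \<in> (\<lambda>j. exp (\<i> * of_real (\<theta> j))) ` {1..p}"
  then show "e \<in> {c. is_eigenvalue U c}" using range_eq by auto
qed

lemma card_eigenvalues_eq_period:
  assumes "p > 0" and shift: "\<And>k. \<theta> (k + p) = \<theta> k + 2 * pi"
  shows "int (card {c. is_eigenvalue U c}) = p"
  using card_image[OF inj_on_exp_angles[OF shift]] eigenvalues_eq_exp_angles[OF assms] assms(1)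
  by simp

lemma eigenangles_period: "\<theta> (k + int (card {c. is_eigenvalue U c})) = \<theta> k + 2 * pi"
proof -
  have "t \<in> range \<theta> \<longleftrightarrow> t + 2 * pi \<in> range \<theta>" for t
    using range_eq exp_i_add_2pi_mult[of t 1] by simp
  then obtain p where "p > 0" "\<And>k. \<theta> (k + p) = \<theta> k + 2 * pi"
    using strict_mono_shift_of_periodic_range[OF mono, of "2 * pi"] by auto
  then show ?thesis using card_eigenvalues_eq_period by simp
qed

lemma Zpoly_eq_prod_eigenangles:
  assumes distinct: "card {c. is_eigenvalue U c} = CARD('n)"
  shows "Zpoly U X = (\<Prod>j\<in>{1..int CARD('n)}. X - exp (\<i> * of_real (\<theta> j)))"
proof -
  have shift: "\<theta> (k + int CARD('n)) = \<theta> k + 2 * pi" for k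
    using eigenangles_period distinct by simp
  have "Zpoly U X = (\<Prod>e\<in>(\<lambda>j. exp (\<i> * of_real (\<theta> j))) ` {1..int CARD('n)}. X - e)"
    using Zpoly_eq_prod_eigenvalues[OF distinct, of X] eigenvalues_eq_exp_angles[OF _ shift]
    by simp
  then show ?thesis
    by (simp add: prod.reindex[OF inj_on_exp_angles[OF shift]])
qed

end

lemma exp_i_ratio_eq_sin_ratio:
  fixes t w :: complex
  assumes "exp (\<i> * t) \<noteq> 1"
  shows "(exp (\<i> * w) - exp (\<i> * t)) / (1 - exp (\<i> * t))
         = exp (\<i> * w / 2) * (sin ((t - w) / 2) / sin (t / 2))"
proof -
  define a where "a = exp (\<i> * w / 2)"
  define b where "b = exp (\<i> * t / 2)"
  have "a \<noteq> 0" "b \<noteq> 0" unfolding a_def b_def by simp_all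
  have ea: "exp (\<i> * w) = a * a" unfolding a_def by (simp flip: exp_add)
  have eb: "exp (\<i> * t) = b * b" unfolding b_def by (simp flip: exp_add)
  have sin_tw: "sin ((t - w) / 2) = (b / a - a / b) / (2 * \<i>)"
  proof -
    have "\<i> * ((t - w) / 2) = \<i> * t / 2 - \<i> * w / 2" "- (\<i> * ((t - w) / 2)) = \<i> * w / 2 - \<i> * t / 2"
      by (simp_all add: field_simps)
    then show ?thesis unfolding sin_exp_eq a_def b_def by (simp only: exp_diff)
  qed
  have sin_t: "sin (t / 2) = (b - 1 / b) / (2 * \<i>)"
    unfolding sin_exp_eq b_def by (simp add: exp_minus field_simps)
  have "b * b - 1 \<noteq> 0" using assms eb by simp
  then show ?thesis
    unfolding ea eb sin_tw sin_t a_def[symmetric] using \<open>a \<noteq> 0\<close> \<open>b \<noteq> 0\<close> by (simp add: field_simps)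
qed

lemma xi_eq_exp_mult_prod_sin_ratio:
  fixes U :: "complex^'n::finite^'n" and t :: "'j \<Rightarrow> real"
  assumes card: "card J = CARD('n)"
    and Zpoly: "\<And>X. Zpoly U X = (\<Prod>j\<in>J. X - exp (\<i> * of_real (t j)))"
    and ne_1: "\<And>j. j \<in> J \<Longrightarrow> exp (\<i> * of_real (t j)) \<noteq> 1"
  shows "xi U z = exp (\<i> * of_real pi * z) *
           (\<Prod>j\<in>J. sin ((of_real (t j) - 2 * of_real pi * z / of_nat CARD('n)) / 2) / sin (of_real (t j) / 2))"
proof -
  define w where "w = 2 * of_real pi * z / of_nat CARD('n)"
  have "xi U z = (\<Prod>j\<in>J. exp (\<i> * w) - exp (\<i> * of_real (t j))) / (\<Prod>j\<in>J. 1 - exp (\<i> * of_real (t j)))"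
    unfolding xi_def Zpoly w_def by (simp add: mult_ac)
  also have "\<dots> = (\<Prod>j\<in>J. exp (\<i> * w / 2) * (sin ((of_real (t j) - w) / 2) / sin (of_real (t j) / 2)))"
    unfolding prod_dividef[symmetric] using ne_1 by (intro prod.cong refl exp_i_ratio_eq_sin_ratio)
  also have "\<dots> = exp (\<i> * w / 2) ^ CARD('n) * (\<Prod>j\<in>J. sin ((of_real (t j) - w) / 2) / sin (of_real (t j) / 2))"
    by (simp only: prod.distrib prod_constant card)
  also have "exp (\<i> * w / 2) ^ CARD('n) = exp (\<i> * of_real pi * z)"
    unfolding exp_of_nat_mult[symmetric] w_def by (simp add: field_simps)
  finally show ?thesis unfolding w_def .
qed

lemma tendsto_one_minus_divide_linear:
  fixes w :: complex and a b :: real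
  assumes "b \<noteq> 0"
  shows "(\<lambda>M::nat. 1 - w / of_real (a + b * real M)) \<longlonglongrightarrow> 1"
proof -
  have "(\<lambda>M::nat. inverse (a + b * real M)) \<longlonglongrightarrow> 0"
  proof (cases "b > 0")
    case True then show ?thesis by real_asymp
  next
    case False
    with assms have "b < 0" by simp
    then show ?thesis by real_asymp
  qed
  then have "(\<lambda>M::nat. 1 - w * of_real (inverse (a + b * real M))) \<longlonglongrightarrow> 1 - w * of_real 0"
    by (intro tendsto_intros)
  then show ?thesis by (simp add: divide_inverse of_real_inverse)
qed

lemma sine_factor_split:
  fixes c w K :: complex
  assumes "K \<noteq> 0" "c + 2 * pi * K \<noteq> 0" "c - 2 * pi * K \<noteq> 0"
  shows "1 - ((c - w) / (2 * pi))\<^sup>2 / K\<^sup>2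
         = (1 - (c / (2 * pi))\<^sup>2 / K\<^sup>2) * (1 - w / (c + 2 * pi * K)) * (1 - w / (c - 2 * pi * K))"
proof -
  have sq: "1 - (y / (2 * pi))\<^sup>2 / K\<^sup>2 = - ((y + 2 * pi * K) * (y - 2 * pi * K)) / (2 * pi * K)\<^sup>2" for y :: complex
    using assms(1) by (simp add: field_simps power2_eq_square)
  have r: "1 - w / (c + 2 * pi * K) = (c - w + 2 * pi * K) / (c + 2 * pi * K)"
    "1 - w / (c - 2 * pi * K) = (c - w - 2 * pi * K) / (c - 2 * pi * K)"
    using assms(2,3) by (simp_all add: field_simps)
  have cancel: "- (a * b) / D * (x / a) * (y / b) = - (x * y) / D"
    if "a \<noteq> 0" "b \<noteq> 0" for a b x y D :: complex
    using that by (simp add: field_simps)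
  show ?thesis
    unfolding sq r by (rule cancel[OF assms(2,3), symmetric])
qed

lemma prod_symmetric_interval_Suc:
  "(\<Prod>m\<in>{- int (Suc M)..int (Suc M)}. f m) = f (- int (Suc M)) * f (int (Suc M)) * (\<Prod>m\<in>{- int M..int M}. f m)"
proof -
  have "{- int (Suc M)..int (Suc M)} = insert (- int (Suc M)) (insert (int (Suc M)) {- int M..int M})"
    by auto
  then show ?thesis by (simp add: mult.assoc)
qed

lemma tendsto_prod_shifted_sine:
  fixes c :: real and w :: complex
  assumes c: "0 < c" "c < 2 * pi"
  shows "(\<lambda>M::nat. \<Prod>m\<in>{- int M..int M}. 1 - w / of_real (c + 2 * pi * of_int m))
           \<longlonglongrightarrow> sin ((of_real c - w) / 2) / sin (of_real c / 2)"
proof -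
  define S where "S y M = of_real pi * y * (\<Prod>k=1..M. 1 - y\<^sup>2 / (of_nat k)\<^sup>2)" for y :: complex and M :: nat
  define P where "P M = (\<Prod>m\<in>{- int M..int M}. 1 - w / of_real (c + 2 * pi * of_int m))" for M :: nat
  define x where "x = (of_real c - w) / (2 * pi)"
  define x0 where "x0 = (of_real c :: complex) / (2 * pi)"
  have nz: "c + 2 * pi * of_int m \<noteq> 0" for m :: int
  proof (cases "m \<ge> 0")
    case True
    then have "0 \<le> 2 * pi * of_int m" by simp
    with c show ?thesis by linarith
  next
    case False
    then have "2 * pi * of_int m \<le> 2 * pi * (-1)" by (intro mult_left_mono) auto
    with c show ?thesis by linarith
  qed
  have ratio: "S x M = S x0 M * P M" for M
  proof (induct M)
    case 0
    have "of_real c \<noteq> (0::complex)" using c by simp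
    then show ?case unfolding S_def P_def x_def x0_def by (simp add: field_simps)
  next
    case (Suc M)
    let ?K = "of_nat (Suc M) :: complex"
    have real_denoms: "of_real c + 2 * pi * ?K = of_real (c + 2 * pi * of_int (int (Suc M)))"
      "of_real c - 2 * pi * ?K = of_real (c + 2 * pi * of_int (- int (Suc M)))"
      by (simp_all add: algebra_simps)
    have "of_real c + 2 * pi * ?K \<noteq> 0" "of_real c - 2 * pi * ?K \<noteq> 0"
      unfolding real_denoms of_real_eq_0_iff by (rule nz)+
    then have split: "1 - x\<^sup>2 / ?K\<^sup>2 = (1 - x0\<^sup>2 / ?K\<^sup>2) * (1 - w / (of_real c + 2 * pi * ?K))
                                      * (1 - w / (of_real c - 2 * pi * ?K))"
      unfolding x_def x0_def by (rule sine_factor_split[OF of_nat_neq_0])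
    have f_pos: "1 - w / of_real (c + 2 * pi * of_int (int (Suc M))) = 1 - w / (of_real c + 2 * pi * ?K)"
      by simp
    have f_neg: "1 - w / of_real (c + 2 * pi * of_int (- int (Suc M))) = 1 - w / (of_real c - 2 * pi * ?K)"
      by (simp add: algebra_simps)
    have "S x (Suc M) = S x M * (1 - x\<^sup>2 / ?K\<^sup>2)"
      unfolding S_def by simp
    also have "\<dots> = S x0 M * (1 - x0\<^sup>2 / ?K\<^sup>2) * ((1 - w / (of_real c - 2 * pi * ?K))
                      * (1 - w / (of_real c + 2 * pi * ?K)) * P M)"
      unfolding Suc split by (simp only: mult_ac)
    also have "\<dots> = S x0 (Suc M) * P (Suc M)"
      unfolding S_def P_def prod_symmetric_interval_Suc f_pos f_neg by simp
    finally show ?case .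
  qed
  have lim_x: "S x \<longlonglongrightarrow> sin (of_real pi * x)" and lim_x0: "S x0 \<longlonglongrightarrow> sin (of_real pi * x0)"
    unfolding S_def by (rule sin_product_formula_complex)+
  have px: "of_real pi * x = (of_real c - w) / 2" and px0: "of_real pi * x0 = of_real c / 2"
    unfolding x_def x0_def by (simp_all add: field_simps)
  have "sin (c / 2) \<noteq> 0" using c by (intro sin_gt_zero[THEN less_imp_neq, symmetric]) auto
  then have sin_nz: "sin (of_real c / 2 :: complex) \<noteq> 0"
    by (metis of_real_divide of_real_numeral sin_of_real of_real_eq_0_iff)
  have "(\<lambda>M. S x M / S x0 M) \<longlonglongrightarrow> sin ((of_real c - w) / 2) / sin (of_real c / 2)"
    using tendsto_divide[OF lim_x lim_x0] sin_nz px px0 by simp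
  moreover have "eventually (\<lambda>M. S x0 M \<noteq> 0) sequentially"
    using lim_x0 sin_nz px0 by (intro tendsto_imp_eventually_ne) auto
  then have "eventually (\<lambda>M. S x M / S x0 M = P M) sequentially"
    by eventually_elim (simp add: ratio)
  ultimately show ?thesis
    unfolding P_def[abs_def] by (rule Lim_transform_eventually)
qed

lemma prod_int_interval_split:
  fixes a b c :: int
  assumes "a \<le> b + 1" "b \<le> c"
  shows "prod f {a..c} = prod f {a..b} * prod f {b + 1..c}"
proof -
  have "{a..c} = {a..b} \<union> {b + 1..c}" using assms by auto
  then show ?thesis by (simp add: prod.union_disjoint)
qed

lemma prod_int_interval_shift: "prod f {a + s..b + s} = (\<Prod>i\<in>{a..b}. f (i + s))"
  for a b s :: int
proof -
  have "prod f ((\<lambda>i. i + s) ` {a..b}) = (\<Prod>i\<in>{a..b}. f (i + s))"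
    by (subst prod.reindex) (auto simp: inj_on_def)
  then show ?thesis by simp
qed

lemma prod_int_interval_blocks:
  fixes N M :: int
  assumes N: "N > 0" and M: "M \<ge> 0"
  shows "(\<Prod>k\<in>{1 - N * M..N + N * M}. f k) = (\<Prod>j\<in>{1..N}. \<Prod>m\<in>{-M..M}. f (j + N * m))"
proof -
  define g where "g p = fst p + N * snd p" for p :: "int \<times> int"
  have div_N: "(j - 1 + N * m) div N = m" if "1 \<le> j" "j \<le> N" for j m
    using that N by (simp add: div_add_self2 div_pos_pos_trivial add.commute)
  have inj: "inj_on g ({1..N} \<times> {-M..M})"
  proof (rule inj_onI)
    fix p q assume p: "p \<in> {1..N} \<times> {-M..M}" and q: "q \<in> {1..N} \<times> {-M..M}" and "g p = g q"
    then have eq: "fst p - 1 + N * snd p = fst q - 1 + N * snd q"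
      unfolding g_def by simp
    have "1 \<le> fst p" "fst p \<le> N" "1 \<le> fst q" "fst q \<le> N"
      using p q by auto
    then have "snd p = snd q"
      using div_N[of "fst p" "snd p"] div_N[of "fst q" "snd q"] eq by metis
    with eq show "p = q" by (simp add: prod_eq_iff)
  qed
  have img: "g ` ({1..N} \<times> {-M..M}) = {1 - N * M..N + N * M}"
  proof (intro equalityI subsetI)
    fix k assume "k \<in> g ` ({1..N} \<times> {-M..M})"
    then obtain j m where jm: "1 \<le> j" "j \<le> N" "-M \<le> m" "m \<le> M" "k = j + N * m"
      unfolding g_def by auto
    then have "N * (-M) \<le> N * m" "N * m \<le> N * M"
      using N mult_left_mono[of "-M" m N] mult_left_mono[of m M N] by simp_all
    with jm have "1 - N * M \<le> k" "k \<le> N + N * M" by linarith+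
    then show "k \<in> {1 - N * M..N + N * M}" by simp
  next
    fix k assume k: "k \<in> {1 - N * M..N + N * M}"
    obtain j m where jm: "k = j + N * m" "1 \<le> j" "j \<le> N"
      using int_decomp_first_period[OF N] .
    with k have "0 < N * (m + M + 1)" "0 < N * (M + 1 - m)"
      by (auto simp: algebra_simps)
    then have "-M \<le> m" "m \<le> M" using N by (simp_all add: zero_less_mult_iff)
    with jm show "k \<in> g ` ({1..N} \<times> {-M..M})"
      unfolding g_def by (auto intro!: image_eqI[of _ _ "(j, m)"])
  qed
  have "(\<Prod>j\<in>{1..N}. \<Prod>m\<in>{-M..M}. f (j + N * m)) = (\<Prod>p\<in>{1..N} \<times> {-M..M}. f (g p))"
    unfolding g_def by (simp add: prod.cartesian_product case_prod_beta)
  also have "\<dots> = prod f {1 - N * M..N + N * M}"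
    using prod.reindex[OF inj, of f] img by (simp add: comp_def)
  finally show ?thesis ..
qed

lemma prod_symmetric_interval_residue:
  fixes f :: "int \<Rightarrow> 'a::comm_monoid_mult" and N M r :: int
  assumes "0 \<le> r" "r < N" "0 \<le> M"
  shows "(\<Prod>k\<in>{- (N * M + r)..N * M + r}. f k) * (\<Prod>i\<in>{r + 1..N}. f (i + N * M))
         = (\<Prod>i\<in>{- r..0}. f (i + - (N * M))) * (\<Prod>k\<in>{1 - N * M..N + N * M}. f k)"
proof -
  have "0 \<le> N * M" using assms by simp
  have "(\<Prod>k\<in>{- (N * M + r)..N * M + r}. f k) * (\<Prod>i\<in>{r + 1..N}. f (i + N * M))
        = prod f {- (N * M + r)..N * M + N}"
    using prod_int_interval_shift[of f "r + 1" "N * M" N] prod_int_interval_split[of "- (N * M + r)" "N * M + r" "N * M + N" f]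
      assms \<open>0 \<le> N * M\<close> by (simp add: ac_simps)
  also have "\<dots> = (\<Prod>i\<in>{- r..0}. f (i + - (N * M))) * (\<Prod>k\<in>{1 - N * M..N + N * M}. f k)"
    using prod_int_interval_shift[of f "- r" "- (N * M)" 0] prod_int_interval_split[of "- (N * M + r)" "- (N * M)" "N * M + N" f]
      assms \<open>0 \<le> N * M\<close> by (simp add: ac_simps)
  finally show ?thesis .
qed

lemma tendsto_of_residue_subsequences:
  fixes X :: "nat \<Rightarrow> 'a::metric_space"
  assumes "n > 0" and lim: "\<And>r. r < n \<Longrightarrow> (\<lambda>M. X (n * M + r)) \<longlonglongrightarrow> L"
  shows "X \<longlonglongrightarrow> L"
proof (rule tendstoI)
  fix e :: real assume "e > 0"
  have "eventually (\<lambda>M. \<forall>r\<in>{..<n}. dist (X (n * M + r)) L < e) sequentially"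
    using lim \<open>e > 0\<close> by (intro eventually_ball_finite) (auto intro: tendstoD)
  then obtain M0 where M0: "\<And>M. M \<ge> M0 \<Longrightarrow> \<forall>r\<in>{..<n}. dist (X (n * M + r)) L < e"
    unfolding eventually_sequentially by blast
  show "eventually (\<lambda>A. dist (X A) L < e) sequentially"
    unfolding eventually_sequentially
  proof (intro exI allI impI)
    fix A assume "n * M0 \<le> A"
    then have "M0 \<le> A div n" using \<open>n > 0\<close> by (metis div_le_mono nonzero_mult_div_cancel_left not_gr0)
    moreover have "A = n * (A div n) + A mod n" "A mod n < n" using \<open>n > 0\<close> by simp_all
    ultimately show "dist (X A) L < e" using M0 by (metis lessThan_iff)
  qed
qed

lemma tendsto_block_products:
  fixes \<theta> :: "int \<Rightarrow> real" and N :: nat and w :: complex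
  assumes "N > 0" and shift: "\<And>k. \<theta> (k + int N) = \<theta> k + 2 * pi"
    and first: "\<And>j. j \<in> {1..int N} \<Longrightarrow> 0 < \<theta> j \<and> \<theta> j < 2 * pi"
  shows "(\<lambda>M::nat. \<Prod>k\<in>{1 - int N * int M..int N + int N * int M}. 1 - w / of_real (\<theta> k))
           \<longlonglongrightarrow> (\<Prod>j\<in>{1..int N}. sin ((of_real (\<theta> j) - w) / 2) / sin (of_real (\<theta> j) / 2))"
proof -
  have "(\<Prod>k\<in>{1 - int N * int M..int N + int N * int M}. 1 - w / of_real (\<theta> k))
        = (\<Prod>j\<in>{1..int N}. \<Prod>m\<in>{- int M..int M}. 1 - w / of_real (\<theta> j + 2 * pi * of_int m))" for M
  proof -
    have "(\<Prod>k\<in>{1 - int N * int M..int N + int N * int M}. 1 - w / of_real (\<theta> k))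
          = (\<Prod>j\<in>{1..int N}. \<Prod>m\<in>{- int M..int M}. 1 - w / of_real (\<theta> (j + int N * m)))"
      by (rule prod_int_interval_blocks) (use \<open>N > 0\<close> in auto)
    then show ?thesis by (simp only: shift_iterate[where \<theta> = \<theta>, OF shift])
  qed
  moreover have "(\<lambda>M::nat. \<Prod>j\<in>{1..int N}. \<Prod>m\<in>{- int M..int M}. 1 - w / of_real (\<theta> j + 2 * pi * of_int m))
      \<longlonglongrightarrow> (\<Prod>j\<in>{1..int N}. sin ((of_real (\<theta> j) - w) / 2) / sin (of_real (\<theta> j) / 2))"
    using first by (intro tendsto_prod tendsto_prod_shifted_sine) auto
  ultimately show ?thesis by simp
qed

lemma tendsto_symmetric_prod_periodic:
  fixes \<theta> :: "int \<Rightarrow> real" and N :: nat and w :: complex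
  assumes "N > 0" and shift: "\<And>k. \<theta> (k + int N) = \<theta> k + 2 * pi"
    and first: "\<And>j. j \<in> {1..int N} \<Longrightarrow> 0 < \<theta> j \<and> \<theta> j < 2 * pi"
  shows "(\<lambda>A::nat. \<Prod>k\<in>{- int A..int A}. 1 - w / of_real (\<theta> k))
           \<longlonglongrightarrow> (\<Prod>j\<in>{1..int N}. sin ((of_real (\<theta> j) - w) / 2) / sin (of_real (\<theta> j) / 2))"
    (is "?F \<longlonglongrightarrow> ?L")
proof (rule tendsto_of_residue_subsequences[OF \<open>N > 0\<close>])
  fix r assume "r < N"
  define f where "f k = 1 - w / of_real (\<theta> k)" for k
  define Q where "Q M = (\<Prod>k\<in>{1 - int N * int M..int N + int N * int M}. f k)" for M :: nat
  define B where "B M = (\<Prod>i\<in>{int r + 1..int N}. f (i + int N * int M))" for M :: nat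
  define C where "C M = (\<Prod>i\<in>{- int r..0}. f (i + - (int N * int M)))" for M :: nat
  have residue: "?F (N * M + r) * B M = C M * Q M" for M
    using prod_symmetric_interval_residue[of "int r" "int N" "int M" f] \<open>r < N\<close>
    unfolding B_def C_def Q_def f_def by simp
  have Q: "Q \<longlonglongrightarrow> ?L"
    unfolding Q_def f_def using assms by (rule tendsto_block_products)
  have "B = (\<lambda>M. \<Prod>i\<in>{int r + 1..int N}. 1 - w / of_real (\<theta> i + 2 * pi * real M))"
    unfolding B_def f_def shift_iterate[where \<theta> = \<theta>, OF shift] by simp
  moreover have "(\<lambda>M. \<Prod>i\<in>{int r + 1..int N}. 1 - w / of_real (\<theta> i + 2 * pi * real M))
      \<longlonglongrightarrow> (\<Prod>i\<in>{int r + 1..int N}. 1)"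
    by (intro tendsto_prod tendsto_one_minus_divide_linear) simp
  ultimately have B: "B \<longlonglongrightarrow> 1" by simp
  have "\<theta> (i + - (int N * int M)) = \<theta> i + (- 2 * pi) * real M" for i M
    using shift_iterate[where \<theta> = \<theta>, OF shift, of i "- int M"] by simp
  then have "C = (\<lambda>M. \<Prod>i\<in>{- int r..0}. 1 - w / of_real (\<theta> i + (- 2 * pi) * real M))"
    unfolding C_def f_def by simp
  moreover have "(\<lambda>M. \<Prod>i\<in>{- int r..0}. 1 - w / of_real (\<theta> i + (- 2 * pi) * real M))
      \<longlonglongrightarrow> (\<Prod>i\<in>{- int r..0}. 1)"
    by (intro tendsto_prod tendsto_one_minus_divide_linear) simp
  ultimately have C: "C \<longlonglongrightarrow> 1" by simp
  have "(\<lambda>M. C M * Q M / B M) \<longlonglongrightarrow> 1 * ?L / 1"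
    by (intro tendsto_intros C Q B) simp
  moreover have "eventually (\<lambda>M. B M \<noteq> 0) sequentially"
    using tendsto_imp_eventually_ne[OF B, of 0] by simp
  then have "eventually (\<lambda>M. C M * Q M / B M = ?F (N * M + r)) sequentially"
    by eventually_elim (metis residue nonzero_mult_div_cancel_right)
  ultimately show "(\<lambda>M. ?F (N * M + r)) \<longlonglongrightarrow> ?L"
    by (simp add: Lim_transform_eventually)
qed

theorem proposition4p1:
  fixes U :: "complex^'n::finite^'n"
    and \<theta> :: "int \<Rightarrow> real"
    and z :: complex
  assumes unitary: "unitary_mat U"
    and distinct: "card {c. is_eigenvalue U c} = CARD('n)"
    and not_one: "\<not> is_eigenvalue U 1"
    and theta_mono: "strict_mono \<theta>"
    and theta_range: "range \<theta> = {t. is_eigenvalue U (exp (\<i> * of_real t))}"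
    and theta_0: "\<theta> 0 < 0"
    and theta_1: "0 < \<theta> 1"
  shows "convergent (\<lambda>A::nat. \<Prod>k\<in>{- int A..int A}.
            (1 - z / of_real (real CARD('n) / (2 * pi) * \<theta> k)))
       \<and> xi U z = exp (\<i> * of_real pi * z) *
            lim (\<lambda>A::nat. \<Prod>k\<in>{- int A..int A}.
            (1 - z / of_real (real CARD('n) / (2 * pi) * \<theta> k)))"
proof -
  interpret unitary_eigenangles U \<theta>
    using unitary theta_mono theta_range theta_0 theta_1 by unfold_locales
  define w where "w = 2 * of_real pi * z / of_nat CARD('n)"
  define L where "L = (\<Prod>j\<in>{1..int CARD('n)}. sin ((of_real (\<theta> j) - w) / 2) / sin (of_real (\<theta> j) / 2))"
  have shift: "\<theta> (k + int CARD('n)) = \<theta> k + 2 * pi" for k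
    using eigenangles_period distinct by simp
  have first: "0 < \<theta> j \<and> \<theta> j < 2 * pi" if "j \<in> {1..int CARD('n)}" for j
    using angle_in_first_period[OF shift] that by simp
  have "exp (\<i> * of_real (\<theta> j)) \<noteq> 1" for j
    using theta_range not_one by (metis (mono_tags) mem_Collect_eq rangeI)
  then have "xi U z = exp (\<i> * of_real pi * z) * L"
    unfolding L_def w_def
    by (intro xi_eq_exp_mult_prod_sin_ratio) (simp_all add: Zpoly_eq_prod_eigenangles[OF distinct])
  moreover have rescale: "z / of_real (real CARD('n) / (2 * pi) * \<theta> k) = w / of_real (\<theta> k)" for k
    unfolding w_def by (simp add: divide_divide_eq_left field_simps)
  then have "(\<lambda>A::nat. \<Prod>k\<in>{- int A..int A}. 1 - z / of_real (real CARD('n) / (2 * pi) * \<theta> k)) \<longlonglongrightarrow> L"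
    unfolding rescale L_def using shift first by (intro tendsto_symmetric_prod_periodic) auto
  ultimately show ?thesis by (auto simp: convergent_def limI)
qed

end
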